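(* Let $f$, $Q$, $L$, $d_Q$ be as in the context, let $x^*\in Q$ be a minimizer of $f$ over $Q$ with $f^*=f(x^* )$, and let $T\in\mathbb{N}_0$. Run the algorithm described in the context with $\gamma_t=\frac{t+1}{2}$ for all $0\le t\le T+1$. Then \[ f(u_T)-f^*\le\frac{4L_Td_Q(x^* )}{(T+1)(T+2)}+\sum_{t=0}^{T-1}\frac{4(L_t-L_{t+1})}{(T+1)(T+2)}\Big(d_Q(z_{t+1})-\tfrac12\|z_t-\hat x_{t+1}\|^2\Big). \]
   Context: $\mathbb{R}^n$ carries the standard scalar product $\langle\cdot,\cdot\rangle$ and a (possibly different) norm $\|\cdot\|$, with dual norm $\|u\|_*=\max\{\langle u,x\rangle:\|x\|=1\}$. $Q\subseteq\mathbb{R}^n$ is closed and convex; $f:\mathbb{R}^n\to\mathbb{R}$ is convex, differentiable, attains its minimum on $Q$, and $L>0$ satisfies $\|\nabla f(x)-\nabla f(y)\|_*\le L\|x-y\|$ for all $x,y\in Q$. A distance-generating function for $Q$ is $d_Q:Q\to\mathbb{R}_{\ge0}$ that is continuous on $Q$, strongly convex with modulus 1 w.r.t. $\|\cdot\|$, and whose subdifferential admits a continuous selection $d_Q'$ on $Q^o:=\{x\in Q:\partial d_Q(x)\neq\emptyset\}$. For $z\in Q^o$, $V_z(x)=d_Q(x)-d_Q(z)-\langle d_Q'(z),x-z\rangle$ and $\mathrm{Prox}_{Q,z}(s)=\arg\min_{x\in Q}\{\langle s,x-z\rangle+V_z(x)\}$. The $d_Q$-center is $c(d_Q)=\arg\min_{x\in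 Q}d_Q(x)$, and it is assumed that $d_Q(c(d_Q))=0$. Algorithm (with weights $(\gamma_t)_{t=0}^{T+1}$, $\Gamma_t:=\sum_{k=0}^t\gamma_k$): set $L_0=L$, $x_0=c(d_Q)$, $u_0=\arg\min_{x\in Q}\{\gamma_0(f(x_0)+\langle\nabla f(x_0),x-x_0\rangle)+L_0d_Q(x)\}$, $z_0=u_0$, $\tau_0=\gamma_1/\Gamma_1$, $x_1=\tau_0z_0+(1-\tau_0)u_0$, $\hat x_1=\mathrm{Prox}_{Q,z_0}(\gamma_1\nabla f(x_1)/L_0)$, $u_1=\tau_0\hat x_1+(1-\tau_0)u_0$. For $t=1,\dots,T$: choose $0<L_t\le L$ with $f(u_t)\le f(x_t)+\langle\nabla f(x_t),u_t-x_t\rangle+\frac{L_t}{2}\|u_t-x_t\|^2$; set $z_t=\arg\min_{x\in Q}\{\sum_{k=0}^t\gamma_k(f(x_k)+\langle\nabla f(x_k),x-x_k\rangle)+L_td_Q(x)\}$; set $\tau_t=\gamma_{t+1}/\Gamma_{t+1}$ and $x_{t+1}=\tau_tz_t+(1-\tau_t)u_t$; set $\hat x_{t+1}=\mathrm{Prox}_{Q,z_t}(\gamma_{t+1}\nabla f(x_{t+1})/L_t)$; set $u_{t+1}=\tau_t\hat x_{t+1}+(1-\tau_t)u_t$. *)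

theory Defs
  imports "HOL-Analysis.Analysis"
begin

definition is_norm :: "('a::euclidean_space \<Rightarrow> real) \<Rightarrow> bool" where
  "is_norm N \<longleftrightarrow> (\<forall>x. 0 \<le> N x) \<and> (\<forall>x. N x = 0 \<longleftrightarrow> x = 0)
     \<and> (\<forall>x y. N (x + y) \<le> N x + N y) \<and> (\<forall>c x. N (c *\<^sub>R x) = \<bar>c\<bar> * N x)"

definition dual_norm :: "('a::euclidean_space \<Rightarrow> real) \<Rightarrow> 'a \<Rightarrow> real" where
  "dual_norm N u = Sup {u \<bullet> x | x. N x = 1}"

definition strongly_convex_on ::
  "'a::euclidean_space set \<Rightarrow> ('a \<Rightarrow> real) \<Rightarrow> ('a \<Rightarrow> real) \<Rightarrow> bool" where
  "strongly_convex_on Q N d \<longleftrightarrow>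
     (\<forall>x\<in>Q. \<forall>y\<in>Q. \<forall>a::real. 0 \<le> a \<and> a \<le> 1 \<longrightarrow>
        d (a *\<^sub>R x + (1 - a) *\<^sub>R y)
          \<le> a * d x + (1 - a) * d y - a * (1 - a) / 2 * (N (x - y))^2)"

text \<open>Subdifferential of d (viewed as +infinity outside Q) at x in Q.\<close>
definition subdiff_on :: "'a::euclidean_space set \<Rightarrow> ('a \<Rightarrow> real) \<Rightarrow> 'a \<Rightarrow> 'a set" where
  "subdiff_on Q d x = {s. \<forall>y\<in>Q. d x + s \<bullet> (y - x) \<le> d y}"

definition dom_subdiff :: "'a::euclidean_space set \<Rightarrow> ('a \<Rightarrow> real) \<Rightarrow> 'a set" where
  "dom_subdiff Q d = {x\<in>Q. subdiff_on Q d x \<noteq> {}}"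

definition dist_gen_fun ::
  "'a::euclidean_space set \<Rightarrow> ('a \<Rightarrow> real) \<Rightarrow> ('a \<Rightarrow> real) \<Rightarrow> ('a \<Rightarrow> 'a) \<Rightarrow> bool" where
  "dist_gen_fun Q N d d' \<longleftrightarrow> (\<forall>x\<in>Q. 0 \<le> d x) \<and> continuous_on Q d \<and> strongly_convex_on Q N d
     \<and> (\<forall>x\<in>dom_subdiff Q d. d' x \<in> subdiff_on Q d x) \<and> continuous_on (dom_subdiff Q d) d'"

definition bregman :: "('a::euclidean_space \<Rightarrow> real) \<Rightarrow> ('a \<Rightarrow> 'a) \<Rightarrow> 'a \<Rightarrow> 'a \<Rightarrow> real" where
  "bregman d d' z x = d x - d z - d' z \<bullet> (x - z)"

definition is_argmin_on :: "'a set \<Rightarrow> ('a \<Rightarrow> real) \<Rightarrow> 'a \<Rightarrow> bool" where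
  "is_argmin_on Q \<phi> p \<longleftrightarrow> is_arg_min \<phi> (\<lambda>x. x \<in> Q) p"

definition is_prox ::
  "'a::euclidean_space set \<Rightarrow> ('a \<Rightarrow> real) \<Rightarrow> ('a \<Rightarrow> 'a) \<Rightarrow> 'a \<Rightarrow> 'a \<Rightarrow> 'a \<Rightarrow> bool" where
  "is_prox Q d d' z s p \<longleftrightarrow> is_argmin_on Q (\<lambda>x. s \<bullet> (x - z) + bregman d d' z x) p"

definition gam :: "nat \<Rightarrow> real" where
  "gam t = (real t + 1) / 2"

definition Gam :: "nat \<Rightarrow> real" where
  "Gam t = (\<Sum>k\<le>t. gam k)"

definition tau :: "nat \<Rightarrow> real" where
  "tau t = gam (Suc t) / Gam (Suc t)"

end

theory Submission
  imports Defs
begin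

text \<open>The estimate functions
  $\psi_t(y) = \sum_{k \le t} \gamma_k (f(x_k) + \langle \nabla f(x_k), y - x_k\rangle) + L_t d_Q(y)$,
  minimised by $z_t$, satisfy the invariant $\Gamma_t f(u_t) \le \psi_t(z_t) + E_t$, where $E_t$
  collects the terms $(L_s - L_{s+1}) (d_Q(z_{s+1}) - \frac12 \|z_s - \hat x_{s+1}\|^2)$ caused by
  changing the smoothness estimate. The induction step combines the descent inequality at
  $u_{t+1}$, convexity of $f$ at $u_t$, the coupling
  $\Gamma_t (x_{t+1} - u_t) = \gamma_{t+1} (z_t - x_{t+1})$, the optimality of the prox step, the
  growth $\psi_t(y) - \psi_t(z_t) \ge L_t V_{z_t}(y)$ of the estimate around its minimiser, and the
  weight condition $\gamma_{t+1}^2 \le \Gamma_{t+1}$. Finally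
  $\psi_T(z_T) \le \psi_T(x^*) \le \Gamma_T f^* + L_T d_Q(x^*)$, and $\gamma_t = (t+1)/2$ gives
  $\Gamma_T = (T+1)(T+2)/4$.

  The growth of $\psi_t$ needs the first-order optimality condition at $z_t$ expressed with the
  given selection $d_Q'$ of $\partial d_Q$; it follows from monotonicity of $\partial d_Q$, density
  of the points where $\partial d_Q$ is nonempty, and continuity of $d_Q'$.\<close>

lemma nonneg_if_nonneg_along_small_steps:
  fixes A B :: real
  assumes "\<And>t. 0 < t \<Longrightarrow> t \<le> 1 \<Longrightarrow> 0 \<le> A + t * B"
  shows "0 \<le> A"
proof (rule tendsto_lowerbound)
  show "((\<lambda>t. A + t * B) \<longlongrightarrow> A) (at_right 0)"
    by (auto intro!: tendsto_eq_intros)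
  show "\<forall>\<^sub>F t in at_right 0. 0 \<le> A + t * B"
    by (rule eventually_mono[OF eventually_at_right_real[of 0 1]]) (use assms in auto)
qed simp

subsection \<open>Norms and dual norms\<close>

lemma is_norm_minus_commute:
  assumes "is_norm N"
  shows "N (a - b) = N (b - a)"
  using assms unfolding is_norm_def by (metis abs_minus_cancel abs_one minus_diff_eq mult_1 scaleR_minus1_left)

lemma is_norm_scaleR:
  assumes "is_norm N"
  shows "N (c *\<^sub>R x) = \<bar>c\<bar> * N x"
  using assms unfolding is_norm_def by blast

lemma is_norm_dominates_norm:
  fixes N :: "'a::euclidean_space \<Rightarrow> real"
  assumes N: "is_norm N"
  shows "\<exists>C>0. \<forall>x. norm x \<le> C * N x"
proof -
  note Nhom = is_norm_scaleR[OF N]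
  have "convex_on UNIV N"
  proof (rule convex_onI)
    fix t :: real and x y :: 'a assume "0 < t" "t < 1"
    then show "N ((1 - t) *\<^sub>R x + t *\<^sub>R y) \<le> (1 - t) * N x + t * N y"
      using N unfolding is_norm_def by (metis Nhom abs_of_nonneg less_eq_real_def diff_ge_0_iff_ge)
  qed simp
  then have "continuous_on (sphere 0 1) N"
    by (intro continuous_on_subset[OF convex_on_continuous]) auto
  moreover have "sphere (0::'a) 1 \<noteq> {}" by simp
  ultimately obtain x0 :: 'a where x0: "x0 \<in> sphere 0 1" and x0_min: "\<And>y. y \<in> sphere 0 1 \<Longrightarrow> N x0 \<le> N y"
    using continuous_attains_inf[OF compact_sphere] by blast
  have "N x0 > 0"
    using N x0 unfolding is_norm_def by (metis less_eq_real_def norm_zero mem_sphere_0 zero_neq_one)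
  moreover have "norm x \<le> (1 / N x0) * N x" for x
  proof (cases "x = 0")
    case False
    then have "N x0 \<le> N ((1 / norm x) *\<^sub>R x)" by (intro x0_min) simp
    also have "\<dots> = N x / norm x" by (simp add: Nhom)
    finally show ?thesis using False \<open>N x0 > 0\<close> by (simp add: field_simps)
  qed (use N in \<open>simp add: is_norm_def\<close>)
  ultimately show ?thesis by (intro exI[of _ "1 / N x0"]) auto
qed

lemma inner_le_dual_norm:
  fixes N :: "'a::euclidean_space \<Rightarrow> real"
  assumes N: "is_norm N"
  shows "u \<bullet> x \<le> dual_norm N u * N x"
proof (cases "x = 0")
  case True
  moreover have "N 0 = 0" using N by (simp add: is_norm_def)
  ultimately show ?thesis by simp
next
  case False
  obtain C where C: "\<And>y. norm y \<le> C * N y" using is_norm_dominates_norm[OF N] by auto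
  have Npos: "N x > 0" using N False unfolding is_norm_def by (metis less_eq_real_def)
  have "bdd_above {u \<bullet> y | y. N y = 1}"
  proof (rule bdd_aboveI)
    fix r assume "r \<in> {u \<bullet> y | y. N y = 1}"
    then obtain y where y: "N y = 1" "r = u \<bullet> y" by auto
    have "r \<le> norm u * norm y" using y norm_cauchy_schwarz by simp
    also have "\<dots> \<le> norm u * C" using C[of y] y by (intro mult_left_mono) auto
    finally show "r \<le> norm u * C" .
  qed
  moreover have "N ((1 / N x) *\<^sub>R x) = 1" using N Npos False by (simp add: is_norm_def)
  ultimately have "u \<bullet> ((1 / N x) *\<^sub>R x) \<le> dual_norm N u"
    unfolding dual_norm_def by (intro cSup_upper) blast+
  then show ?thesis using Npos by (simp add: field_simps)
qed

subsection \<open>Convex functions with Lipschitz gradient\<close>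

lemma has_real_derivative_along_line:
  assumes "\<And>y. (f has_derivative (\<lambda>h. g y \<bullet> h)) (at y)"
  shows "((\<lambda>\<theta>. f (a + \<theta> *\<^sub>R v)) has_real_derivative (g (a + \<theta> *\<^sub>R v) \<bullet> v)) (at \<theta>)"
proof -
  have "((\<lambda>\<theta>::real. a + \<theta> *\<^sub>R v) has_derivative (\<lambda>t. t *\<^sub>R v)) (at \<theta>)"
    by (auto intro!: derivative_eq_intros)
  from has_derivative_compose[OF this assms]
  show ?thesis by (simp add: has_field_derivative_def o_def mult.commute[of _ "g _ \<bullet> v"])
qed

lemma convex_on_gradient_inequality:
  assumes f_convex: "convex_on UNIV f"
    and f_grad: "\<And>y. (f has_derivative (\<lambda>h. g y \<bullet> h)) (at y)"
  shows "f x + g x \<bullet> (y - x) \<le> f y"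
proof -
  define h where "h \<theta> = f (x + \<theta> *\<^sub>R (y - x))" for \<theta> :: real
  have "convex_on UNIV h"
  proof (rule convex_onI)
    fix t a b :: real assume "0 < t" "t < 1"
    moreover have "h ((1 - t) *\<^sub>R a + t *\<^sub>R b)
        = f ((1 - t) *\<^sub>R (x + a *\<^sub>R (y - x)) + t *\<^sub>R (x + b *\<^sub>R (y - x)))"
      unfolding h_def by (simp add: algebra_simps)
    ultimately show "h ((1 - t) *\<^sub>R a + t *\<^sub>R b) \<le> (1 - t) * h a + t * h b"
      unfolding h_def using convex_onD[OF f_convex, of t] by simp
  qed simp
  moreover have "(h has_real_derivative (g x \<bullet> (y - x))) (at 0)"
    using has_real_derivative_along_line[OF f_grad, of x "y - x" 0] by (simp add: h_def[abs_def])
  ultimately have "h 1 - h 0 \<ge> g x \<bullet> (y - x) * (1 - 0)"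
    by (intro convex_on_imp_above_tangent[where A = UNIV]) auto
  then show ?thesis by (simp add: h_def)
qed

lemma descent_lemma:
  assumes N: "is_norm N" and Q: "convex Q"
    and f_grad: "\<And>y. (f has_derivative (\<lambda>h. g y \<bullet> h)) (at y)"
    and f_lip: "\<And>y y'. y \<in> Q \<Longrightarrow> y' \<in> Q \<Longrightarrow> dual_norm N (g y - g y') \<le> L * N (y - y')"
    and a: "a \<in> Q" and b: "b \<in> Q"
  shows "f b \<le> f a + g a \<bullet> (b - a) + L / 2 * (N (b - a))^2"
proof -
  define v where "v = b - a"
  note Nhom = is_norm_scaleR[OF N]
  have Nnn: "0 \<le> N y" for y using N by (simp add: is_norm_def)
  define \<phi> where "\<phi> \<theta> = f (a + \<theta> *\<^sub>R v) - \<theta> * (g a \<bullet> v) - L * \<theta>^2 / 2 * (N v)^2" for \<theta>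
  have "\<phi> 1 \<le> \<phi> 0"
  proof (rule DERIV_nonpos_imp_nonincreasing[of 0 1 \<phi>])
    fix \<theta> :: real assume \<theta>: "0 \<le> \<theta>" "\<theta> \<le> 1"
    have D: "(\<phi> has_real_derivative (g (a + \<theta> *\<^sub>R v) \<bullet> v - g a \<bullet> v - L * \<theta> * (N v)^2)) (at \<theta>)"
      unfolding \<phi>_def by (rule derivative_eq_intros has_real_derivative_along_line[OF f_grad] | simp)+
    have "a + \<theta> *\<^sub>R v = (1 - \<theta>) *\<^sub>R a + \<theta> *\<^sub>R b" by (simp add: v_def algebra_simps)
    then have on_segment: "a + \<theta> *\<^sub>R v \<in> Q" using Q a b \<theta> by (simp add: convex_def)
    have "g (a + \<theta> *\<^sub>R v) \<bullet> v - g a \<bullet> v = (g (a + \<theta> *\<^sub>R v) - g a) \<bullet> v"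
      by (simp add: inner_diff_left)
    also have "\<dots> \<le> dual_norm N (g (a + \<theta> *\<^sub>R v) - g a) * N v" by (rule inner_le_dual_norm[OF N])
    also have "\<dots> \<le> L * N (a + \<theta> *\<^sub>R v - a) * N v"
      by (intro mult_right_mono f_lip on_segment a Nnn)
    also have "\<dots> = L * \<theta> * (N v)^2" using \<theta> by (simp add: Nhom power2_eq_square)
    finally show "\<exists>y. (\<phi> has_real_derivative y) (at \<theta>) \<and> y \<le> 0" using D by (intro exI) auto
  qed simp
  then show ?thesis by (simp add: \<phi>_def v_def)
qed

subsection \<open>Distance-generating functions\<close>

lemma strongly_convex_onD:
  assumes "strongly_convex_on Q N d" "x \<in> Q" "y \<in> Q" "0 \<le> a" "a \<le> 1"
  shows "d (a *\<^sub>R x + (1 - a) *\<^sub>R y) \<le> a * d x + (1 - a) * d y - a * (1 - a) / 2 * (N (x - y))^2"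
  using assms unfolding strongly_convex_on_def by blast

lemma strongly_convex_on_imp_convex_on:
  assumes "strongly_convex_on Q N d" "convex Q"
  shows "convex_on Q d"
proof (rule convex_onI)
  fix t :: real and x y assume t: "0 < t" "t < 1" and "x \<in> Q" "y \<in> Q"
  then have "d ((1 - t) *\<^sub>R x + t *\<^sub>R y) \<le> (1 - t) * d x + t * d y - (1 - t) * t / 2 * (N (x - y))^2"
    using strongly_convex_onD[OF assms(1), of x y "1 - t"] by simp
  moreover have "0 \<le> (1 - t) * t / 2 * (N (x - y))^2" using t by simp
  ultimately show "d ((1 - t) *\<^sub>R x + t *\<^sub>R y) \<le> (1 - t) * d x + t * d y" by linarith
qed (rule assms(2))

lemma strongly_convex_on_subgradient_inequality:
  assumes sc: "strongly_convex_on Q N d" and Q: "convex Q" and z: "z \<in> Q" and x: "x \<in> Q"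
    and c: "c \<in> subdiff_on Q d z"
  shows "1/2 * (N (x - z))^2 \<le> d x - d z - c \<bullet> (x - z)"
proof -
  let ?B = "1/2 * (N (x - z))^2"
  have "0 \<le> (d x - d z - c \<bullet> (x - z) - ?B) + a * ?B" if a: "0 < a" "a \<le> 1" for a
  proof -
    let ?p = "a *\<^sub>R x + (1 - a) *\<^sub>R z"
    have "?p \<in> Q" using Q x z a by (simp add: convex_def)
    then have "d z + c \<bullet> (a *\<^sub>R (x - z)) \<le> d ?p"
      using c unfolding subdiff_on_def by (force simp: algebra_simps)
    also have "\<dots> \<le> a * d x + (1 - a) * d z - a * (1 - a) / 2 * (N (x - z))^2"
      using strongly_convex_onD[OF sc x z] a by simp
    finally have "a * (c \<bullet> (x - z)) \<le> a * (d x - d z - (1 - a) * ?B)"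
      by (simp add: algebra_simps)
    then have "c \<bullet> (x - z) \<le> d x - d z - (1 - a) * ?B"
      using a by simp
    then show ?thesis unfolding left_diff_distrib by linarith
  qed
  from nonneg_if_nonneg_along_small_steps[OF this] show ?thesis by simp
qed

lemma bregman_ge_half_sq:
  assumes "dist_gen_fun Q N d d'" "convex Q" "z \<in> dom_subdiff Q d" "x \<in> Q"
  shows "1/2 * (N (x - z))^2 \<le> bregman d d' z x"
  using strongly_convex_on_subgradient_inequality[of Q N d z x "d' z"] assms
  by (simp add: dist_gen_fun_def dom_subdiff_def bregman_def)

lemma subdiff_on_at_regularized_argmin:
  fixes Q :: "'a::euclidean_space set"
  assumes d: "convex_on Q d" and w: "w \<in> Q"
    and w_min: "\<And>y. y \<in> Q \<Longrightarrow> d w + k/2 * (norm (w - x))^2 \<le> d y + k/2 * (norm (y - x))^2"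
  shows "- k *\<^sub>R (w - x) \<in> subdiff_on Q d w"
  unfolding subdiff_on_def
proof safe
  fix y assume y: "y \<in> Q"
  let ?A = "d y - d w + k * ((w - x) \<bullet> (y - w))"
  let ?B = "k/2 * (norm (y - w))^2"
  have "0 \<le> ?A + t * ?B" if t: "0 < t" "t \<le> 1" for t
  proof -
    let ?wt = "(1 - t) *\<^sub>R w + t *\<^sub>R y"
    have "?wt - x = (w - x) + t *\<^sub>R (y - w)" by (simp add: algebra_simps)
    moreover have "(norm ((w - x) + t *\<^sub>R (y - w)))^2
        = (norm (w - x))^2 + 2 * t * ((w - x) \<bullet> (y - w)) + t^2 * (norm (y - w))^2"
      unfolding power2_norm_eq_inner
      by (simp add: inner_add_left inner_add_right inner_commute algebra_simps power2_eq_square)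
    ultimately have expand: "(norm (?wt - x))^2
        = (norm (w - x))^2 + 2 * t * ((w - x) \<bullet> (y - w)) + t^2 * (norm (y - w))^2"
      by (simp only:)
    have "?wt \<in> Q" using d y w t by (simp add: convex_on_def convex_def)
    then have "d w + k/2 * (norm (w - x))^2 \<le> d ?wt + k/2 * (norm (?wt - x))^2"
      by (rule w_min)
    moreover have "d ?wt \<le> (1 - t) * d w + t * d y"
      using convex_onD[OF d, of t w y] t w y by simp
    moreover have "t * (?A + t * ?B)
        = t * (d y - d w) + k/2 * (2 * t * ((w - x) \<bullet> (y - w)) + t^2 * (norm (y - w))^2)"
      by (simp add: algebra_simps power2_eq_square)
    ultimately have "0 \<le> t * (?A + t * ?B)"
      unfolding expand distrib_left left_diff_distrib right_diff_distrib mult_1 by linarith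
    then show ?thesis using t by (simp add: zero_le_mult_iff)
  qed
  from nonneg_if_nonneg_along_small_steps[OF this]
  show "d w + (- k *\<^sub>R (w - x)) \<bullet> (y - w) \<le> d y" by simp
qed

lemma dom_subdiff_dense:
  fixes Q :: "'a::euclidean_space set"
  assumes dgf: "dist_gen_fun Q N d d'" and Q: "closed Q" "convex Q"
    and x: "x \<in> Q" and e: "e > 0"
  shows "\<exists>w\<in>dom_subdiff Q d. norm (w - x) < e"
proof -
  define \<rho> where "\<rho> = e / 2"
  define k where "k = 2 * (d x + 1) / \<rho>^2"
  have d_nonneg: "\<And>y. y \<in> Q \<Longrightarrow> 0 \<le> d y" using dgf by (simp add: dist_gen_fun_def)
  have \<rho>: "\<rho> > 0" using e by (simp add: \<rho>_def)
  have k: "k > 0" "k/2 * \<rho>^2 = d x + 1"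
    using d_nonneg[OF x] \<rho> by (simp_all add: k_def)
  define \<phi> where "\<phi> y = d y + k/2 * (norm (y - x))^2" for y
  \<comment> \<open>By the choice of \<open>k\<close>, \<open>\<phi> > \<phi> x\<close> outside the ball, so a minimiser of \<open>\<phi>\<close> on the compact set
    \<open>Q \<inter> cball x \<rho>\<close> minimises \<open>\<phi>\<close> on all of \<open>Q\<close>.\<close>
  let ?K = "Q \<inter> cball x \<rho>"
  have "continuous_on Q d" using dgf by (simp add: dist_gen_fun_def)
  then have "continuous_on ?K d" by (rule continuous_on_subset) blast
  then have "continuous_on ?K \<phi>" unfolding \<phi>_def by (intro continuous_intros)
  moreover have "compact ?K" using Q by (intro closed_Int_compact) auto
  moreover have x_K: "x \<in> ?K" using x \<rho> by simp
  ultimately obtain w where w: "w \<in> ?K" and w_min: "\<And>y. y \<in> ?K \<Longrightarrow> \<phi> w \<le> \<phi> y"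
    using continuous_attains_inf[of ?K \<phi>] by (metis empty_iff)
  have "\<phi> w \<le> \<phi> y" if y: "y \<in> Q" for y
  proof (cases "y \<in> cball x \<rho>")
    case True
    then show ?thesis using y by (intro w_min) simp
  next
    case False
    then have "\<rho>^2 \<le> (norm (y - x))^2"
      using \<rho> by (intro power_mono) (auto simp: dist_norm norm_minus_commute)
    then have "d x + 1 \<le> k/2 * (norm (y - x))^2"
      unfolding k(2)[symmetric] by (rule mult_left_mono) (use k in simp)
    moreover have "\<phi> w \<le> \<phi> x" by (rule w_min[OF x_K])
    ultimately show ?thesis using d_nonneg[OF y] by (simp add: \<phi>_def)
  qed
  moreover have "convex_on Q d"
    using dgf Q(2) strongly_convex_on_imp_convex_on[of Q N d] by (simp add: dist_gen_fun_def)
  ultimately have "- k *\<^sub>R (w - x) \<in> subdiff_on Q d w"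
    using w by (intro subdiff_on_at_regularized_argmin) (auto simp: \<phi>_def)
  then have "w \<in> dom_subdiff Q d" using w by (auto simp: dom_subdiff_def)
  moreover have "norm (w - x) < e" using w e by (simp add: \<rho>_def dist_norm norm_minus_commute)
  ultimately show ?thesis by blast
qed

lemma subdiff_on_at_argmin:
  assumes L: "L > 0" and z: "z \<in> Q"
    and z_min: "\<And>y. y \<in> Q \<Longrightarrow> 0 \<le> G \<bullet> (y - z) + L * (d y - d z)"
  shows "- (1/L) *\<^sub>R G \<in> subdiff_on Q d z"
  unfolding subdiff_on_def
proof safe
  fix y assume "y \<in> Q"
  then have "0 \<le> (1/L) * (G \<bullet> (y - z) + L * (d y - d z))" using z_min L by simp
  then show "d z + (- (1/L) *\<^sub>R G) \<bullet> (y - z) \<le> d y" using L by (simp add: algebra_simps)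
qed

text \<open>Monotonicity of \<open>\<partial>d\<close> gives the inequality at points \<open>w\<close> of \<open>dom_subdiff Q d\<close> close to
  \<open>z + h (y - z)\<close>; letting \<open>h \<rightarrow> 0\<close> and using continuity of \<open>d'\<close> gives it at \<open>z\<close>.\<close>

lemma dist_gen_fun_first_order_optimality:
  fixes Q :: "'a::euclidean_space set"
  assumes dgf: "dist_gen_fun Q N d d'" and Q: "closed Q" "convex Q"
    and L: "L > 0" and z: "z \<in> Q"
    and z_min: "\<And>y. y \<in> Q \<Longrightarrow> 0 \<le> G \<bullet> (y - z) + L * (d y - d z)"
    and y: "y \<in> Q"
  shows "0 \<le> (G + L *\<^sub>R d' z) \<bullet> (y - z)"
proof -
  have z_dom: "z \<in> dom_subdiff Q d"
    using subdiff_on_at_argmin[OF L z z_min] z by (auto simp: dom_subdiff_def)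
  have monotone: "0 \<le> (G + L *\<^sub>R d' w) \<bullet> (w - z)" if w: "w \<in> dom_subdiff Q d" for w
  proof -
    have "d' w \<in> subdiff_on Q d w" using dgf w by (simp add: dist_gen_fun_def)
    then have "d w + d' w \<bullet> (z - w) \<le> d z" using z by (simp add: subdiff_on_def)
    moreover have "0 \<le> G \<bullet> (w - z) + L * (d w - d z)" using z_min w by (simp add: dom_subdiff_def)
    moreover have "d' w \<bullet> (z - w) = - (d' w \<bullet> (w - z))" by (simp add: inner_diff_right)
    ultimately have "0 \<le> G \<bullet> (w - z) + L * (d' w \<bullet> (w - z))"
      using L by (smt (verit) mult_left_mono)
    then show ?thesis by (simp add: inner_add_left)
  qed
  define h where "h n = inverse (real (Suc n))" for n
  have h: "0 < h n" "h n \<le> 1" for n by (simp_all add: h_def inverse_le_1_iff)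
  have "\<exists>w\<in>dom_subdiff Q d. norm (w - (z + h n *\<^sub>R (y - z))) < h n ^ 2" for n
  proof (rule dom_subdiff_dense[OF dgf Q])
    have "z + h n *\<^sub>R (y - z) = (1 - h n) *\<^sub>R z + h n *\<^sub>R y" by (simp add: algebra_simps)
    then show "z + h n *\<^sub>R (y - z) \<in> Q" using Q(2) z y h[of n] by (simp add: convex_def)
  qed (use h[of n] in simp)
  then obtain w where w_dom: "\<And>n. w n \<in> dom_subdiff Q d"
    and w_close: "\<And>n. norm (w n - (z + h n *\<^sub>R (y - z))) < h n ^ 2"
    by metis
  have h_lim: "h \<longlonglongrightarrow> 0" unfolding h_def by (rule LIMSEQ_inverse_real_of_nat)
  define v where "v n = (1 / h n) *\<^sub>R (w n - z)" for n
  have "(\<lambda>n. v n - (y - z)) \<longlonglongrightarrow> 0"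
  proof (rule Lim_null_comparison[OF always_eventually h_lim], rule allI)
    fix n
    have "v n - (y - z) = (1 / h n) *\<^sub>R (w n - (z + h n *\<^sub>R (y - z)))"
      using h[of n] by (simp add: v_def algebra_simps)
    then have "norm (v n - (y - z)) = norm (w n - (z + h n *\<^sub>R (y - z))) / h n"
      using h[of n] by simp
    also have "\<dots> \<le> h n" using w_close[of n] h[of n] by (simp add: divide_le_eq power2_eq_square)
    finally show "norm (v n - (y - z)) \<le> h n" .
  qed
  then have v_lim: "v \<longlonglongrightarrow> y - z" by (rule LIM_zero_cancel)
  have "w = (\<lambda>n. z + h n *\<^sub>R v n)"
  proof
    show "w n = z + h n *\<^sub>R v n" for n using h(1)[of n] by (simp add: v_def)
  qed
  moreover have "(\<lambda>n. z + h n *\<^sub>R v n) \<longlonglongrightarrow> z + 0 *\<^sub>R (y - z)"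
    by (intro tendsto_add tendsto_const tendsto_scaleR h_lim v_lim)
  ultimately have w_lim: "w \<longlonglongrightarrow> z" by simp
  have "continuous_on (dom_subdiff Q d) d'" using dgf by (simp add: dist_gen_fun_def)
  from continuous_on_tendsto_compose[OF this w_lim z_dom always_eventually] w_dom
  have "(\<lambda>n. d' (w n)) \<longlonglongrightarrow> d' z" by blast
  then have "(\<lambda>n. (G + L *\<^sub>R d' (w n)) \<bullet> v n) \<longlonglongrightarrow> (G + L *\<^sub>R d' z) \<bullet> (y - z)"
    by (intro tendsto_inner tendsto_add tendsto_const tendsto_scaleR v_lim)
  moreover have "0 \<le> (G + L *\<^sub>R d' (w n)) \<bullet> v n" for n
    using monotone[OF w_dom] h[of n] by (simp add: v_def)
  ultimately show ?thesis by (intro LIMSEQ_le_const) auto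
qed

lemma is_argmin_on_iff: "is_argmin_on Q \<phi> p \<longleftrightarrow> p \<in> Q \<and> (\<forall>y\<in>Q. \<phi> p \<le> \<phi> y)"
  by (auto simp: is_argmin_on_def is_arg_min_linorder)

subsection \<open>The accelerated method with adaptive smoothness estimates\<close>

locale accelerated_dual_averaging =
  fixes Q :: "'a::euclidean_space set" and N :: "'a \<Rightarrow> real"
    and f :: "'a \<Rightarrow> real" and g :: "'a \<Rightarrow> 'a"
    and d :: "'a \<Rightarrow> real" and d' :: "'a \<Rightarrow> 'a"
    and L :: real and T :: nat and \<gamma> \<Gamma> \<tau> :: "nat \<Rightarrow> real"
    and x u z xh :: "nat \<Rightarrow> 'a" and Lt :: "nat \<Rightarrow> real"
  assumes N_norm: "is_norm N"
    and Q: "closed Q" "convex Q"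
    and f_convex: "convex_on UNIV f"
    and f_grad: "\<And>y. (f has_derivative (\<lambda>h. g y \<bullet> h)) (at y)"
    and L_pos: "L > 0"
    and f_lip: "\<And>y y'. y \<in> Q \<Longrightarrow> y' \<in> Q \<Longrightarrow> dual_norm N (g y - g y') \<le> L * N (y - y')"
    and dgf: "dist_gen_fun Q N d d'"
    and weight_pos: "\<And>t. 0 < \<gamma> t"
    and weight_sum: "\<And>t. \<Gamma> t = (\<Sum>k\<le>t. \<gamma> k)"
    and weight_growth: "\<And>t. (\<gamma> t)^2 \<le> \<Gamma> t"
    and weight_ratio: "\<And>t. \<tau> t = \<gamma> (Suc t) / \<Gamma> (Suc t)"
    and L0: "Lt 0 = L"
    and x0: "is_argmin_on Q d (x 0)"
    and d_center: "d (x 0) = 0"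
    and u0: "is_argmin_on Q (\<lambda>y. \<gamma> 0 * (f (x 0) + g (x 0) \<bullet> (y - x 0)) + Lt 0 * d y) (u 0)"
    and z0: "z 0 = u 0"
    and Lt_pos: "\<And>t. 1 \<le> t \<Longrightarrow> t \<le> T \<Longrightarrow> 0 < Lt t"
    and Lt_desc: "\<And>t. 1 \<le> t \<Longrightarrow> t \<le> T \<Longrightarrow>
        f (u t) \<le> f (x t) + g (x t) \<bullet> (u t - x t) + Lt t / 2 * (N (u t - x t))^2"
    and zt: "\<And>t. 1 \<le> t \<Longrightarrow> t \<le> T \<Longrightarrow>
        is_argmin_on Q (\<lambda>y. (\<Sum>k\<le>t. \<gamma> k * (f (x k) + g (x k) \<bullet> (y - x k))) + Lt t * d y) (z t)"
    and x_step: "\<And>t. t < T \<Longrightarrow> x (Suc t) = \<tau> t *\<^sub>R z t + (1 - \<tau> t) *\<^sub>R u t"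
    and xh_step: "\<And>t. t < T \<Longrightarrow>
        is_prox Q d d' (z t) ((\<gamma> (Suc t) / Lt t) *\<^sub>R g (x (Suc t))) (xh (Suc t))"
    and u_step: "\<And>t. t < T \<Longrightarrow> u (Suc t) = \<tau> t *\<^sub>R xh (Suc t) + (1 - \<tau> t) *\<^sub>R u t"
begin

definition model :: "nat \<Rightarrow> 'a \<Rightarrow> real" where
  "model k y = f (x k) + g (x k) \<bullet> (y - x k)"

definition estimate :: "nat \<Rightarrow> 'a \<Rightarrow> real" where
  "estimate t y = (\<Sum>k\<le>t. \<gamma> k * model k y) + Lt t * d y"

definition aggregated_gradient :: "nat \<Rightarrow> 'a" where
  "aggregated_gradient t = (\<Sum>k\<le>t. \<gamma> k *\<^sub>R g (x k))"

definition adaptivity_error :: "nat \<Rightarrow> real" where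
  "adaptivity_error t =
     (\<Sum>s<t. (Lt s - Lt (Suc s)) * (d (z (Suc s)) - 1/2 * (N (z s - xh (Suc s)))^2))"

lemma Lt_positive: "t \<le> T \<Longrightarrow> 0 < Lt t"
  using Lt_pos[of t] L0 L_pos by (cases t) auto

lemma weight_sum_Suc: "\<Gamma> (Suc t) = \<Gamma> t + \<gamma> (Suc t)"
  by (simp add: weight_sum)

lemma weight_sum_nonneg: "0 \<le> \<Gamma> t"
  unfolding weight_sum by (intro sum_nonneg) (simp add: less_imp_le weight_pos)

lemma estimate_diff:
  "estimate t y - estimate t w = aggregated_gradient t \<bullet> (y - w) + Lt t * (d y - d w)"
proof -
  have "(\<Sum>k\<le>t. \<gamma> k * model k y - \<gamma> k * model k w) = (\<Sum>k\<le>t. (\<gamma> k *\<^sub>R g (x k)) \<bullet> (y - w))"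
    by (intro sum.cong) (auto simp: model_def algebra_simps inner_diff_right)
  then show ?thesis
    by (simp add: estimate_def aggregated_gradient_def sum_subtractf inner_sum_left algebra_simps)
qed

lemma z_argmin: "t \<le> T \<Longrightarrow> z t \<in> Q \<and> (\<forall>y\<in>Q. estimate t (z t) \<le> estimate t y)"
  using u0 z0 zt[of t] by (cases t) (auto simp: is_argmin_on_iff estimate_def model_def)

lemma z_optimal:
  assumes "t \<le> T" "y \<in> Q"
  shows "0 \<le> aggregated_gradient t \<bullet> (y - z t) + Lt t * (d y - d (z t))"
  using z_argmin[OF assms(1)] assms(2) estimate_diff[of t y "z t"] by auto

lemma z_dom:
  assumes "t \<le> T"
  shows "z t \<in> dom_subdiff Q d"
proof -
  have "z t \<in> Q" using z_argmin[OF assms] by blast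
  with subdiff_on_at_argmin[OF Lt_positive[OF assms] this z_optimal[OF assms]]
  show ?thesis unfolding dom_subdiff_def by blast
qed

lemma estimate_ge_bregman:
  assumes "t \<le> T" "y \<in> Q"
  shows "Lt t * bregman d d' (z t) y \<le> estimate t y - estimate t (z t)"
proof -
  have "0 \<le> (aggregated_gradient t + Lt t *\<^sub>R d' (z t)) \<bullet> (y - z t)"
    using z_argmin[OF assms(1)] z_optimal[OF assms(1)] assms(2)
    by (intro dist_gen_fun_first_order_optimality[OF dgf Q Lt_positive[OF assms(1)]]) auto
  then show ?thesis
    unfolding estimate_diff bregman_def inner_add_left by (simp add: algebra_simps)
qed

lemma xh_argmin:
  assumes t: "t < T" and y: "y \<in> Q"
  shows "\<gamma> (Suc t) * model (Suc t) (xh (Suc t)) + Lt t * bregman d d' (z t) (xh (Suc t))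
    \<le> \<gamma> (Suc t) * model (Suc t) y + Lt t * bregman d d' (z t) y"
proof -
  let ?\<gamma> = "\<gamma> (Suc t)" and ?g = "g (x (Suc t))"
  have L: "0 < Lt t" using t by (intro Lt_positive) simp
  have "(?\<gamma> / Lt t) * (?g \<bullet> (xh (Suc t) - z t)) + bregman d d' (z t) (xh (Suc t))
      \<le> (?\<gamma> / Lt t) * (?g \<bullet> (y - z t)) + bregman d d' (z t) y"
    using xh_step[OF t] y by (simp add: is_prox_def is_argmin_on_iff)
  then have "Lt t * ((?\<gamma> / Lt t) * (?g \<bullet> (xh (Suc t) - z t)) + bregman d d' (z t) (xh (Suc t)))
      \<le> Lt t * ((?\<gamma> / Lt t) * (?g \<bullet> (y - z t)) + bregman d d' (z t) y)"
    using L by (intro mult_left_mono) auto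
  then have "?\<gamma> * (?g \<bullet> (xh (Suc t) - z t)) + Lt t * bregman d d' (z t) (xh (Suc t))
      \<le> ?\<gamma> * (?g \<bullet> (y - z t)) + Lt t * bregman d d' (z t) y"
    using L by (simp add: distrib_left)
  moreover have model_shift: "model (Suc t) w = model (Suc t) (z t) + ?g \<bullet> (w - z t)" for w
    by (simp add: model_def inner_diff_right)
  ultimately show ?thesis
    unfolding model_shift[of "xh (Suc t)"] model_shift[of y] distrib_left by linarith
qed

lemma xh_in_Q: "t < T \<Longrightarrow> xh (Suc t) \<in> Q"
  using xh_step by (simp add: is_prox_def is_argmin_on_iff)


text \<open>The identity behind the choice \<open>\<tau>\<^sub>t = \<gamma>\<^sub>t\<^sub>+\<^sub>1 / \<Gamma>\<^sub>t\<^sub>+\<^sub>1\<close>.\<close>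

lemma coupling:
  assumes "t < T"
  shows "\<Gamma> t *\<^sub>R (x (Suc t) - u t) = \<gamma> (Suc t) *\<^sub>R (z t - x (Suc t))"
proof -
  have pos: "0 < \<Gamma> t + \<gamma> (Suc t)" using weight_sum_nonneg[of t] weight_pos[of "Suc t"] by linarith
  have "\<Gamma> t * \<tau> t = \<gamma> (Suc t) * (1 - \<tau> t)"
    using pos by (simp add: weight_ratio weight_sum_Suc field_simps)
  moreover have "x (Suc t) - u t = \<tau> t *\<^sub>R (z t - u t)"
    and "z t - x (Suc t) = (1 - \<tau> t) *\<^sub>R (z t - u t)"
    unfolding x_step[OF assms] by (simp_all add: algebra_simps)
  ultimately show ?thesis by simp
qed


lemma value_step:
  assumes t: "t < T"
  shows "\<Gamma> (Suc t) * f (u (Suc t))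
    \<le> \<Gamma> t * f (u t) + \<gamma> (Suc t) * model (Suc t) (xh (Suc t)) + Lt (Suc t) / 2 * (N (xh (Suc t) - z t))^2"
proof -
  let ?\<gamma> = "\<gamma> (Suc t)" and ?\<Gamma> = "\<Gamma> (Suc t)" and ?g = "g (x (Suc t))"
    and ?x = "x (Suc t)" and ?h = "xh (Suc t)" and ?c = "Lt (Suc t) / 2" and ?D = "(N (xh (Suc t) - z t))^2"
  have \<Gamma>_pos: "0 < ?\<Gamma>"
    using weight_sum_nonneg[of t] weight_pos[of "Suc t"] unfolding weight_sum_Suc by linarith
  have \<tau>_nonneg: "0 \<le> \<tau> t"
    unfolding weight_ratio using weight_pos[of "Suc t"] \<Gamma>_pos by simp
  have \<tau>_mult: "?\<Gamma> * \<tau> t = ?\<gamma>"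
    unfolding weight_ratio using \<Gamma>_pos by simp
  have "?\<Gamma> * (\<tau> t)^2 = ?\<gamma>^2 / ?\<Gamma>"
    unfolding weight_ratio using \<Gamma>_pos by (simp add: power2_eq_square)
  also have "\<dots> \<le> 1" using weight_growth[of "Suc t"] \<Gamma>_pos by simp
  finally have \<tau>_sq: "?\<Gamma> * (\<tau> t)^2 \<le> 1" .
  have c_pos: "0 < ?c" using t by (simp add: Lt_positive)
  have "u (Suc t) - ?x = \<tau> t *\<^sub>R (?h - z t)"
    unfolding x_step[OF t] u_step[OF t] by (simp add: algebra_simps)
  then have "f (u (Suc t)) \<le> f ?x + \<tau> t * (?g \<bullet> (?h - z t)) + ?c * ((\<tau> t)^2 * ?D)"
    using Lt_desc[of "Suc t"] t \<tau>_nonneg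
    by (simp add: is_norm_scaleR[OF N_norm] power_mult_distrib)
  then have "?\<Gamma> * f (u (Suc t)) \<le> ?\<Gamma> * (f ?x + \<tau> t * (?g \<bullet> (?h - z t)) + ?c * ((\<tau> t)^2 * ?D))"
    using \<Gamma>_pos by (intro mult_left_mono) auto
  also have "\<dots> = ?\<Gamma> * f ?x + (?\<Gamma> * \<tau> t) * (?g \<bullet> (?h - z t)) + ?c * ((?\<Gamma> * (\<tau> t)^2) * ?D)"
    by (simp add: algebra_simps)
  also have "?c * ((?\<Gamma> * (\<tau> t)^2) * ?D) \<le> ?c * ?D"
    using \<tau>_sq c_pos \<Gamma>_pos by (intro mult_left_mono mult_left_le_one_le) auto
  finally have descent: "?\<Gamma> * f (u (Suc t)) \<le> ?\<Gamma> * f ?x + ?\<gamma> * (?g \<bullet> (?h - z t)) + ?c * ?D"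
    unfolding \<tau>_mult by simp
  have "f ?x + ?g \<bullet> (u t - ?x) \<le> f (u t)"
    by (rule convex_on_gradient_inequality[OF f_convex f_grad])
  then have "f ?x \<le> f (u t) + ?g \<bullet> (?x - u t)"
    unfolding inner_diff_right by linarith
  then have "\<Gamma> t * f ?x \<le> \<Gamma> t * (f (u t) + ?g \<bullet> (?x - u t))"
    by (rule mult_left_mono) (rule weight_sum_nonneg)
  then have "\<Gamma> t * f ?x \<le> \<Gamma> t * f (u t) + \<Gamma> t * (?g \<bullet> (?x - u t))"
    by (simp add: distrib_left)
  also have "\<Gamma> t * (?g \<bullet> (?x - u t)) = ?\<gamma> * (?g \<bullet> (z t - ?x))"
    using arg_cong[OF coupling[OF t], of "inner ?g"] by simp
  finally have convexity: "\<Gamma> t * f ?x \<le> \<Gamma> t * f (u t) + ?\<gamma> * (?g \<bullet> (z t - ?x))" .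
  have "?\<gamma> * model (Suc t) ?h = ?\<gamma> * f ?x + ?\<gamma> * (?g \<bullet> (z t - ?x)) + ?\<gamma> * (?g \<bullet> (?h - z t))"
    by (simp add: model_def inner_diff_right algebra_simps)
  then show ?thesis
    using descent convexity unfolding weight_sum_Suc distrib_right by linarith
qed

lemma value_le_estimate_start: "\<Gamma> 0 * f (u 0) \<le> estimate 0 (z 0)"
proof -
  have x0_Q: "x 0 \<in> Q" and u0_Q: "u 0 \<in> Q" using x0 u0 by (simp_all add: is_argmin_on_iff)
  have sc: "strongly_convex_on Q N d" using dgf by (simp add: dist_gen_fun_def)
  have "0 \<in> subdiff_on Q d (x 0)" using x0 by (simp add: is_argmin_on_iff subdiff_on_def)
  from strongly_convex_on_subgradient_inequality[OF sc Q(2) x0_Q u0_Q this]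
  have "1/2 * (N (u 0 - x 0))^2 \<le> d (u 0)" using d_center by simp
  then have "L * (1/2 * (N (u 0 - x 0))^2) \<le> L * d (u 0)" using L_pos by simp
  moreover have "f (u 0) \<le> model 0 (u 0) + L / 2 * (N (u 0 - x 0))^2"
    unfolding model_def by (rule descent_lemma[OF N_norm Q(2) f_grad f_lip x0_Q u0_Q])
  ultimately have "f (u 0) \<le> model 0 (u 0) + L * d (u 0)" by linarith
  moreover have "\<gamma> 0 \<le> 1"
    using weight_growth[of 0] weight_pos[of 0] by (simp add: weight_sum power2_eq_square)
  moreover have "0 \<le> L * d (u 0)" using dgf u0_Q L_pos by (simp add: dist_gen_fun_def)
  ultimately have "\<gamma> 0 * f (u 0) \<le> \<gamma> 0 * (model 0 (u 0) + L * d (u 0))"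
    and "\<gamma> 0 * (L * d (u 0)) \<le> L * d (u 0)"
    using weight_pos[of 0] by (simp_all add: mult_left_le_one_le)
  then show ?thesis unfolding distrib_left by (simp add: weight_sum estimate_def z0 L0)
qed

lemma estimate_Suc:
  "estimate (Suc t) y = estimate t y + \<gamma> (Suc t) * model (Suc t) y + (Lt (Suc t) - Lt t) * d y"
  by (simp add: estimate_def algebra_simps)

lemma estimate_step:
  assumes t: "t < T"
  shows "\<Gamma> (Suc t) * f (u (Suc t)) - estimate (Suc t) (z (Suc t))
    \<le> \<Gamma> t * f (u t) - estimate t (z t)
      + (Lt t - Lt (Suc t)) * (d (z (Suc t)) - 1/2 * (N (z t - xh (Suc t)))^2)"
proof -
  let ?z = "z (Suc t)" and ?h = "xh (Suc t)" and ?V = "bregman d d' (z t)"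
    and ?D = "1/2 * (N (z t - xh (Suc t)))^2"
  have L: "0 < Lt t" using t by (simp add: Lt_positive)
  have z_Q: "?z \<in> Q" using z_argmin[of "Suc t"] t by simp
  have "?D \<le> ?V ?h"
    using bregman_ge_half_sq[OF dgf Q(2) z_dom xh_in_Q[OF t]] t is_norm_minus_commute[OF N_norm]
    by simp
  then have "Lt t * ?D \<le> Lt t * ?V ?h" using L by simp
  moreover have "\<gamma> (Suc t) * model (Suc t) ?h + Lt t * ?V ?h \<le> \<gamma> (Suc t) * model (Suc t) ?z + Lt t * ?V ?z"
    by (rule xh_argmin[OF t z_Q])
  moreover have "Lt t * ?V ?z \<le> estimate t ?z - estimate t (z t)"
    using estimate_ge_bregman[OF _ z_Q] t by simp
  moreover have "Lt (Suc t) / 2 * (N (?h - z t))^2 = Lt (Suc t) * ?D"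
    unfolding is_norm_minus_commute[OF N_norm, of ?h] by simp
  ultimately show ?thesis
    using value_step[OF t] estimate_Suc[of t ?z] unfolding right_diff_distrib left_diff_distrib
    by linarith
qed

lemma value_le_estimate: "t \<le> T \<Longrightarrow> \<Gamma> t * f (u t) \<le> estimate t (z t) + adaptivity_error t"
proof (induction t)
  case 0
  then show ?case using value_le_estimate_start by (simp add: adaptivity_error_def)
next
  case (Suc t)
  then show ?case
    using estimate_step[of t] by (simp add: adaptivity_error_def)
qed

theorem convergence_bound:
  assumes "y \<in> Q"
  shows "\<Gamma> T * (f (u T) - f y) \<le> Lt T * d y + adaptivity_error T"
proof -
  have "estimate T (z T) \<le> estimate T y" using z_argmin[of T] assms by simp
  also have "\<dots> \<le> (\<Sum>k\<le>T. \<gamma> k * f y) + Lt T * d y"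
    unfolding estimate_def model_def
    by (intro add_right_mono sum_mono mult_left_mono convex_on_gradient_inequality[OF f_convex f_grad])
      (simp add: less_imp_le weight_pos)
  also have "(\<Sum>k\<le>T. \<gamma> k * f y) = \<Gamma> T * f y" by (simp add: weight_sum sum_distrib_right)
  finally show ?thesis using value_le_estimate[of T] by (simp add: right_diff_distrib)
qed

end

lemma Gam_eq: "Gam t = (real t + 1) * (real t + 2) / 4"
  by (induction t) (simp_all add: Gam_def gam_def field_simps)

theorem corollary1:
  fixes Q :: "(real^'n) set" and N :: "real^'n \<Rightarrow> real"
    and f :: "real^'n \<Rightarrow> real" and g :: "real^'n \<Rightarrow> real^'n"
    and d :: "real^'n \<Rightarrow> real" and d' :: "real^'n \<Rightarrow> real^'n"
    and L :: real and xstar :: "real^'n" and T :: nat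
    and x u z xh :: "nat \<Rightarrow> real^'n" and Lt :: "nat \<Rightarrow> real"
  assumes norm: "is_norm N"
    and Q: "closed Q" "convex Q"
    and f_convex: "convex_on UNIV f"
    and f_grad: "\<And>y. (f has_derivative (\<lambda>h. g y \<bullet> h)) (at y)"
    and L_pos: "L > 0"
    and f_lip: "\<And>y y'. y \<in> Q \<Longrightarrow> y' \<in> Q \<Longrightarrow> dual_norm N (g y - g y') \<le> L * N (y - y')"
    and dgf: "dist_gen_fun Q N d d'"
    and xstar: "is_argmin_on Q f xstar"
    and L0: "Lt 0 = L"
    and x0: "is_argmin_on Q d (x 0)"
    and d_center: "d (x 0) = 0"
    and u0: "is_argmin_on Q (\<lambda>y. gam 0 * (f (x 0) + g (x 0) \<bullet> (y - x 0)) + Lt 0 * d y) (u 0)"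
    and z0: "z 0 = u 0"
    and Lt_bnd: "\<And>t. 1 \<le> t \<Longrightarrow> t \<le> T \<Longrightarrow> 0 < Lt t \<and> Lt t \<le> L"
    and Lt_desc: "\<And>t. 1 \<le> t \<Longrightarrow> t \<le> T \<Longrightarrow>
        f (u t) \<le> f (x t) + g (x t) \<bullet> (u t - x t) + Lt t / 2 * (N (u t - x t))^2"
    and zt: "\<And>t. 1 \<le> t \<Longrightarrow> t \<le> T \<Longrightarrow>
        is_argmin_on Q (\<lambda>y. (\<Sum>k\<le>t. gam k * (f (x k) + g (x k) \<bullet> (y - x k))) + Lt t * d y) (z t)"
    and x_step: "\<And>t. t \<le> T \<Longrightarrow> x (Suc t) = tau t *\<^sub>R z t + (1 - tau t) *\<^sub>R u t"
    and xh_step: "\<And>t. t \<le> T \<Longrightarrow> is_prox Q d d' (z t) ((gam (Suc t) / Lt t) *\<^sub>R g (x (Suc t))) (xh (Suc t))"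
    and u_step: "\<And>t. t \<le> T \<Longrightarrow> u (Suc t) = tau t *\<^sub>R xh (Suc t) + (1 - tau t) *\<^sub>R u t"
  shows "f (u T) - f xstar \<le>
      4 * Lt T * d xstar / ((real T + 1) * (real T + 2))
      + (\<Sum>t<T. 4 * (Lt t - Lt (Suc t)) / ((real T + 1) * (real T + 2))
                 * (d (z (Suc t)) - 1/2 * (N (z t - xh (Suc t)))^2))"
proof -
  have weights: "0 < gam t" "(gam t)^2 \<le> Gam t" for t
    by (simp_all add: gam_def Gam_eq power2_eq_square field_simps)
  interpret accelerated_dual_averaging Q N f g d d' L T gam Gam tau x u z xh Lt
    by (unfold_locales; (fact assms weights Gam_def tau_def)?)
      (use Lt_bnd x_step xh_step u_step in auto)
  define P where "P = (real T + 1) * (real T + 2)"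
  have P: "P > 0" "Gam T = P / 4" by (simp_all add: P_def Gam_eq)
  have "xstar \<in> Q" using xstar by (simp add: is_argmin_on_iff)
  from convergence_bound[OF this]
  have "f (u T) - f xstar \<le> 4 / P * (Lt T * d xstar + adaptivity_error T)"
    using P by (simp add: field_simps)
  also have "\<dots> = 4 * Lt T * d xstar / P + 4 / P * adaptivity_error T"
    by (simp add: distrib_left)
  also have "4 / P * adaptivity_error T
      = (\<Sum>t<T. 4 * (Lt t - Lt (Suc t)) / P * (d (z (Suc t)) - 1/2 * (N (z t - xh (Suc t)))^2))"
    unfolding adaptivity_error_def sum_distrib_left by (intro sum.cong refl) simp
  finally show ?thesis by (simp add: P_def)
qed

end
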